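(* Let $\lambda=(\lambda_1\ge\dots\ge\lambda_N)$ be a dominant coweight of $\operatorname{GL}(N)$, $|\lambda|=\sum_i\lambda_i$, $n(\lambda)=\sum_{i=1}^N(i-1)\lambda_i$. Consider the power series $$P_\lambda(t)=\sum_{\vec\lambda}t^{2\Delta(\lambda,\vec\lambda)}\prod_{j=1}^{N-1}P_{\operatorname{GL}(N-j)}(t;\lambda^j),$$ summed over tuples $\vec\lambda=(\lambda^1,\dots,\lambda^{N-1})$ with $\lambda^j$ a dominant coweight of $\operatorname{GL}(N-j)$, where, with $\lambda^0:=\lambda$, $$2\Delta(\lambda,\vec\lambda)=\sum_{j=1}^{N-1}\sum_{i,i'}|\lambda^{j-1}_i-\lambda^j_{i'}|-2\sum_{j=1}^{N-1}\sum_{i<i'}|\lambda^j_i-\lambda^j_{i'}|,$$ and $P_{\operatorname{GL}(n)}(t;\mu)=\prod_k\prod_{s=1}^{m_k}(1-t^{2s})^{-1}$, $m_k$ being the multiplicities of the distinct entries of $\mu$. Then $P_\lambda(t)\in t^{(N-1)|\lambda|-2n(\lambda)}\mathbb Z[[t]]$, and the coefficient of $t^{(N-1)|\lambda|-2n(\lambda)}$ equals $\dim V^\lambda$, the dimension of the irreducible $\operatorname{GL}(N)$-module of highest weight $\lambda$. (Equivalently, the costalk $H^{G_{\mathcal O}}_*(\tilde{\mathcal R}^\lambda)$ of the type $A_{N-1}$ theory, with the modified grading whose Hilbert series is $P_\lambda$, lives in degrees $\ge\dim\mathrm{Gr}^\lambda_{\operatorname{PGL}(N)}$ and its lowest component has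 dimension $\dim V^\lambda$.)
   Context: $P_{\operatorname{GL}(n)}(t;\mu)$ is the Poincaré series of $H^*_{\operatorname{Stab}_{\operatorname{GL}(n)}(\mu)}(\mathrm{pt})$. $(N-1)|\lambda|-2n(\lambda)=\langle2\rho^\vee,\lambda\rangle=\dim\mathrm{Gr}^\lambda_{\operatorname{PGL}(N)}$. The series $P_\lambda(t)$ is the (modified) monopole formula for the costalk at $\lambda$ of the type $A_{N-1}$ quiver gauge theory with $\dim V=(N-1,\dots,1)$, $\dim W=(N,0,\dots,0)$. *)

theory Defs
  imports "HOL-Computational_Algebra.Formal_Power_Series"
begin

definition dominant :: "nat \<Rightarrow> int list \<Rightarrow> bool" where
  "dominant n mu \<longleftrightarrow> length mu = n \<and> sorted_wrt (\<ge>) mu"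

text \<open>Poincare series of the equivariant cohomology of a point for the stabiliser
  of mu in GL(n): product over distinct entries with multiplicity m of
  prod_{s=1}^m (1 - t^(2s))^(-1).\<close>
definition P_GL :: "int list \<Rightarrow> rat fps" where
  "P_GL mu = (\<Prod>v\<in>set mu. \<Prod>s\<in>{1..count (mset mu) v}. inverse (1 - fps_X ^ (2 * s)))"

text \<open>Tuples (lambda^1,...,lambda^(N-1)), lambda^j (stored at index j-1) a dominant
  coweight of GL(N-j).\<close>
definition tuples :: "nat \<Rightarrow> int list list set" where
  "tuples N = {ls. length ls = N - 1 \<and> (\<forall>j\<in>{1..N-1}. dominant (N - j) (ls ! (j - 1)))}"

definition twoDelta :: "int list \<Rightarrow> int list list \<Rightarrow> int" where
  "twoDelta lam ls = (let N = length lam; L = (\<lambda>j. (lam # ls) ! j) in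
     (\<Sum>j\<in>{1..N-1}. \<Sum>i<N-j+1. \<Sum>i'<N-j. \<bar>L (j-1) ! i - L j ! i'\<bar>)
     - 2 * (\<Sum>j\<in>{1..N-1}. \<Sum>i<N-j. \<Sum>i'<N-j. if i < i' then \<bar>L j ! i - L j ! i'\<bar> else 0))"

text \<open>Coefficient of t^k in P_lambda(t) (k an integer exponent): sum over all tuples
  of t^(2 Delta) times the product of Poincare series; only tuples with 2 Delta \<le> k
  contribute. (This is the genuine coefficient when that set of tuples is finite.)\<close>
definition P_coeff :: "int list \<Rightarrow> int \<Rightarrow> rat" where
  "P_coeff lam k = (let N = length lam in
     \<Sum>ls\<in>{ls\<in>tuples N. twoDelta lam ls \<le> k}.
        fps_nth (\<Prod>j\<in>{1..N-1}. P_GL (ls ! (j - 1))) (nat (k - twoDelta lam ls)))"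

definition size_cw :: "int list \<Rightarrow> int" where
  "size_cw lam = sum_list lam"

definition n_cw :: "int list \<Rightarrow> int" where
  "n_cw lam = (\<Sum>i<length lam. int i * lam ! i)"

text \<open>Dimension of the irreducible GL(N)-module of highest weight lambda
  (Weyl dimension formula).\<close>
definition dimV :: "int list \<Rightarrow> rat" where
  "dimV lam = (let N = length lam in
     \<Prod>j<N. \<Prod>i<j. of_int (lam ! i - lam ! j + int j - int i) / of_int (int j - int i))"

end

(* Let D(a, b) = 2 sum |a_i - b_i'| - sum |a_i - a_i'| - sum |b_i - b_i'| for consecutive
   rows a = lambda^(j-1), b = lambda^j of a tuple.  Then 2 Delta = spread lambda + 1/2 sum_j D,
   where spread mu = sum_(i<i') |mu_i - mu_i'| is (N-1)|lambda| - 2 n(lambda) for dominant lambda.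
   Counting at every integer level s the entries above s gives D(a, b) = sum_s 2 c (c - 1) with
   c = #{a_i > s} - #{b_i > s}.  Hence D >= 0, with equality exactly when b interlaces a, and D
   also bounds how far the entries of b leave the range of a, so each coefficient is a finite sum.
   The exponents are therefore at least (N-1)|lambda| - 2 n(lambda), attained exactly by the
   Gelfand-Tsetlin patterns, and since every P_GL has integer coefficients and constant term 1,
   the lowest coefficient counts these patterns.  In the coordinates y_i = i - lambda_i their
   number obeys the branching recursion of det (y_i choose k) (summing a binomial column over an
   interval is a hockey-stick telescope), and the binomial Vandermonde determinant evaluates
   this to the Weyl dimension formula. *)

theory Submission
  imports Defs "Jordan_Normal_Form.Determinant"
begin

section \<open>Binomial determinants\<close>

lemma index_mult_mat_sum:
  assumes "A \<in> carrier_mat n m" "B \<in> carrier_mat m k" "i < n" "j < k"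
  shows "(A * B) $$ (i,j) = (\<Sum>l<m. A $$ (i,l) * B $$ (l,j))"
  using assms by (simp add: scalar_prod_def row_def col_def atLeast0LessThan)

lemma det_scale_rows_cols:
  fixes u v :: "nat \<Rightarrow> 'a::comm_ring_1"
  shows "det (mat n n (\<lambda>(i,k). u i * v k * f i k)) =
     (\<Prod>i<n. u i) * (\<Prod>k<n. v k) * det (mat n n (\<lambda>(i,k). f i k))"
proof -
  have "det (mat n n (\<lambda>(i,k). u i * v k * f i k)) =
    (\<Sum>p\<in>{p. p permutes {0..<n}}. signof p * (\<Prod>i = 0..<n. u i * v (p i) * f i (p i)))"
    by (subst det_def'[of _ n]) (auto intro!: sum.cong prod.cong simp: permutes_in_image)
  also have "\<dots> = (\<Sum>p\<in>{p. p permutes {0..<n}}. (\<Prod>i<n. u i) * (\<Prod>k<n. v k) *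
      (signof p * (\<Prod>i = 0..<n. f i (p i))))"
  proof (rule sum.cong[OF refl])
    fix p assume "p \<in> {p. p permutes {0..<n}}"
    then have "(\<Prod>i = 0..<n. v (p i)) = (\<Prod>k = 0..<n. v k)"
      using prod.permute[of p "{0..<n}" v] by (simp add: comp_def)
    then show "signof p * (\<Prod>i = 0..<n. u i * v (p i) * f i (p i)) =
      (\<Prod>i<n. u i) * (\<Prod>k<n. v k) * (signof p * (\<Prod>i = 0..<n. f i (p i)))"
      by (simp add: prod.distrib atLeast0LessThan ac_simps)
  qed
  also have "\<dots> = (\<Prod>i<n. u i) * (\<Prod>k<n. v k) * det (mat n n (\<lambda>(i,k). f i k))"
    by (subst det_def'[of _ n])
      (auto simp: sum_distrib_left intro!: sum.cong prod.cong simp: permutes_in_image)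
  finally show ?thesis .
qed

definition binom_mat :: "nat \<Rightarrow> (nat \<Rightarrow> int) \<Rightarrow> rat mat" where
  "binom_mat n y = mat n n (\<lambda>(i,k). of_int (y i) gchoose k)"

lemma binom_mat_carrier [simp]: "binom_mat n y \<in> carrier_mat n n"
  by (simp add: binom_mat_def)

lemma binom_mat_restrict: "binom_mat n (restrict y {..<n}) = binom_mat n y"
  unfolding binom_mat_def by (rule eq_matI) auto

text \<open>Right multiplication by the unitriangular matrix \<open>(c gchoose (k - j))\<close> is
  Vandermonde's convolution.\<close>
lemma det_binom_mat_translate: "det (binom_mat n (\<lambda>i. y i + c)) = det (binom_mat n y)"
proof -
  define C :: "rat mat" where
    "C = mat n n (\<lambda>(j,k). if j \<le> k then of_int c gchoose (k - j) else 0)"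
  have C: "C \<in> carrier_mat n n" by (simp add: C_def)
  have "binom_mat n y * C = binom_mat n (\<lambda>i. y i + c)"
  proof (rule eq_matI)
    fix i k assume "i < dim_row (binom_mat n (\<lambda>i. y i + c))" "k < dim_col (binom_mat n (\<lambda>i. y i + c))"
    then have ik: "i < n" "k < n" by (auto simp: binom_mat_def)
    have "(binom_mat n y * C) $$ (i,k) =
        (\<Sum>l<n. (of_int (y i) gchoose l) * (if l \<le> k then of_int c gchoose (k - l) else 0))"
      unfolding index_mult_mat_sum[OF binom_mat_carrier C ik]
      by (intro sum.cong refl) (use ik in \<open>auto simp: binom_mat_def C_def\<close>)
    also have "\<dots> = (\<Sum>l\<in>{0..k}. (of_int (y i) gchoose l) * (of_int c gchoose (k - l)))"
      using ik by (intro sum.mono_neutral_cong_right) auto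
    also have "\<dots> = (of_int (y i) + of_int c) gchoose k"
      by (rule gbinomial_Vandermonde)
    finally show "(binom_mat n y * C) $$ (i,k) = binom_mat n (\<lambda>i. y i + c) $$ (i,k)"
      using ik by (simp add: binom_mat_def)
  qed (auto simp: binom_mat_def C_def)
  moreover have "det C = 1"
    by (subst det_upper_triangular[OF _ C]) (auto simp: upper_triangular_def C_def prod_list_diag_prod)
  ultimately show ?thesis
    using det_mult[OF binom_mat_carrier[of n y] C] by simp
qed

lemma fact_eq_prod_Suc: "(fact n :: 'a::{comm_semiring_1,semiring_char_0}) = (\<Prod>i<n. 1 + of_nat i)"
  by (induction n) (simp_all add: algebra_simps)

lemma det_binom_mat_Suc_zero:
  assumes "y 0 = 0"
  shows "det (binom_mat (Suc n) y) =
    (\<Prod>i<n. of_int (y (Suc i))) / fact n * det (binom_mat n (\<lambda>i. y (Suc i) - 1))"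
proof -
  let ?B = "binom_mat (Suc n) y"
  have "det ?B = (\<Sum>k<Suc n. ?B $$ (0,k) * cofactor ?B 0 k)"
    by (rule laplace_expansion_row[OF binom_mat_carrier]) simp
  also have "\<dots> = (\<Sum>k<Suc n. if k = 0 then cofactor ?B 0 0 else 0)"
    using assms by (intro sum.cong) (auto simp: binom_mat_def gbinomial_0_left)
  also have "\<dots> = det (mat_delete ?B 0 0)"
    by (simp add: cofactor_def)
  also have "mat_delete ?B 0 0 =
      mat n n (\<lambda>(i,k). of_int (y (Suc i)) * (1 / of_nat (Suc k)) * (of_int (y (Suc i) - 1) gchoose k))"
  proof (rule eq_matI)
    fix i k assume "i < dim_row (mat n n (\<lambda>(i,k). of_int (y (Suc i)) * (1 / of_nat (Suc k)) *
      (of_int (y (Suc i) - 1) gchoose k) :: rat))" "k < dim_col (mat n n (\<lambda>(i,k).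
      of_int (y (Suc i)) * (1 / of_nat (Suc k)) * (of_int (y (Suc i) - 1) gchoose k) :: rat))"
    then have ik: "i < n" "k < n" by auto
    have "(of_nat (Suc k) :: rat) * (of_int (y (Suc i)) gchoose Suc k) =
        of_int (y (Suc i)) * ((of_int (y (Suc i)) - 1) gchoose k)"
      by (rule gbinomial_absorption)
    then show "mat_delete ?B 0 0 $$ (i,k) = mat n n (\<lambda>(i,k). of_int (y (Suc i)) * (1 / of_nat (Suc k)) *
        (of_int (y (Suc i) - 1) gchoose k)) $$ (i,k)"
      using ik by (simp add: mat_delete_def binom_mat_def field_simps del: of_nat_Suc)
  qed (auto simp: mat_delete_def binom_mat_def)
  also have "det \<dots> = (\<Prod>i<n. of_int (y (Suc i))) * (\<Prod>k<n. 1 / of_nat (Suc k)) *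
      det (binom_mat n (\<lambda>i. y (Suc i) - 1))"
    by (subst det_scale_rows_cols) (simp add: binom_mat_def)
  also have "(\<Prod>k<n. 1 / of_nat (Suc k) :: rat) = 1 / fact n"
    by (simp add: prod_dividef fact_eq_prod_Suc)
  finally show ?thesis by simp
qed

lemma det_binom_mat:
  "det (binom_mat n y) = (\<Prod>j<n. \<Prod>i<j. of_int (y j - y i)) / (\<Prod>j<n. fact j)"
proof (induction n arbitrary: y)
  case 0
  then show ?case by (simp add: binom_mat_def)
next
  case (Suc n)
  have "det (binom_mat (Suc n) y) = det (binom_mat (Suc n) (\<lambda>i. y i - y 0))"
    using det_binom_mat_translate[of "Suc n" y "- y 0"] by simp
  also have "\<dots> = (\<Prod>j<n. of_int (y (Suc j) - y 0)) / fact n *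
      ((\<Prod>j<n. \<Prod>i<j. of_int (y (Suc j) - y (Suc i))) / (\<Prod>j<n. fact j))"
    by (subst det_binom_mat_Suc_zero) (simp_all add: Suc.IH)
  also have "\<dots> = (\<Prod>j<Suc n. \<Prod>i<j. of_int (y j - y i)) / (\<Prod>j<Suc n. fact j)"
    using fact_eq_prod_Suc[of n, where 'a = rat] by (simp add: prod.lessThan_Suc_shift prod.distrib del: prod.lessThan_Suc)
  finally show ?case .
qed

lemma sum_gbinomial_int_interval:
  assumes "a \<le> b"
  shows "(\<Sum>t\<in>{a..<b}. (of_int t gchoose k :: rat)) = (of_int b gchoose Suc k) - (of_int a gchoose Suc k)"
  using assms
proof (induction b rule: int_ge_induct)
  case base
  then show ?case by simp
next
  case (step b)
  then have "{a..<b+1} = insert b {a..<b}" by auto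
  then show ?case
    using step by (simp add: gbinomial_Suc_Suc[of "of_int b" k, symmetric] algebra_simps)
qed

text \<open>Multilinearity in the rows, and on each row a hockey-stick sum.\<close>
lemma sum_det_binom_mat_PiE:
  assumes "\<And>i. i < n \<Longrightarrow> y i \<le> y (Suc i)"
  shows "(\<Sum>z\<in>PiE {..<n} (\<lambda>i. {y i..<y (Suc i)}). det (binom_mat n z)) =
    det (mat n n (\<lambda>(i,k). (of_int (y (Suc i)) gchoose Suc k) - (of_int (y i) gchoose Suc k)))"
    (is "_ = det ?M")
proof -
  let ?P = "{p. p permutes {0..<n}}"
  let ?Z = "PiE {..<n} (\<lambda>i. {y i..<y (Suc i)})"
  have "(\<Sum>z\<in>?Z. det (binom_mat n z)) =
      (\<Sum>z\<in>?Z. \<Sum>p\<in>?P. signof p * (\<Prod>i<n. of_int (z i) gchoose p i))"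
    by (intro sum.cong refl, subst det_def'[of _ n])
      (auto simp: binom_mat_def atLeast0LessThan permutes_in_image intro!: sum.cong prod.cong)
  also have "\<dots> = (\<Sum>p\<in>?P. signof p * (\<Sum>z\<in>?Z. \<Prod>i<n. of_int (z i) gchoose p i))"
    by (subst sum.swap) (simp add: sum_distrib_left)
  also have "\<dots> = (\<Sum>p\<in>?P. signof p * (\<Prod>i<n. \<Sum>t\<in>{y i..<y (Suc i)}. of_int t gchoose p i))"
    by (subst prod_sum_PiE) auto
  also have "\<dots> = (\<Sum>p\<in>?P. signof p * (\<Prod>i<n. ?M $$ (i, p i)))"
    using assms by (intro sum.cong refl arg_cong[where f = "\<lambda>x. _ * x"] prod.cong)
      (auto simp: sum_gbinomial_int_interval permutes_in_image)
  also have "\<dots> = det ?M"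
    by (subst det_def'[of _ n]) (auto simp: atLeast0LessThan)
  finally show ?thesis .
qed

text \<open>Subtract from each row its predecessor; the first column becomes the first unit
  vector.\<close>
lemma det_binom_mat_Suc_diff:
  "det (binom_mat (Suc n) y) =
    det (mat n n (\<lambda>(i,k). (of_int (y (Suc i)) gchoose Suc k) - (of_int (y i) gchoose Suc k)))"
proof -
  let ?B = "binom_mat (Suc n) y"
  define E :: "rat mat" where
    "E = mat (Suc n) (Suc n) (\<lambda>(i,l). (if l = i then 1 else 0) - (if Suc l = i then 1 else 0))"
  define Q :: "rat mat" where
    "Q = mat (Suc n) (Suc n) (\<lambda>(i,k). (of_int (y i) gchoose k) - (if i = 0 then 0 else of_int (y (i - 1)) gchoose k))"
  have E: "E \<in> carrier_mat (Suc n) (Suc n)" and Q: "Q \<in> carrier_mat (Suc n) (Suc n)"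
    by (simp_all add: E_def Q_def)
  have "E * ?B = Q"
  proof (rule eq_matI)
    fix i k assume "i < dim_row Q" "k < dim_col Q"
    then have ik: "i < Suc n" "k < Suc n" by (auto simp: Q_def)
    have "(E * ?B) $$ (i,k) = (\<Sum>l<Suc n. (if l = i then ?B $$ (l,k) else 0))
        - (\<Sum>l<Suc n. (if l = i - 1 \<and> i \<noteq> 0 then ?B $$ (l,k) else 0))"
      unfolding index_mult_mat_sum[OF E binom_mat_carrier ik] sum_subtractf[symmetric]
      by (intro sum.cong refl) (use ik in \<open>auto simp: E_def\<close>)
    then show "(E * ?B) $$ (i,k) = Q $$ (i,k)"
      using ik by (cases i) (simp_all add: Q_def binom_mat_def)
  qed (simp_all add: E_def Q_def binom_mat_def)
  moreover have "det E = 1"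
    by (subst det_lower_triangular[OF _ E]) (auto simp: E_def prod_list_diag_prod)
  ultimately have "det ?B = det Q"
    using det_mult[OF E binom_mat_carrier[of "Suc n" y]] by simp
  also have "\<dots> = (\<Sum>i<Suc n. Q $$ (i,0) * cofactor Q i 0)"
    by (rule laplace_expansion_column[OF Q]) simp
  also have "\<dots> = (\<Sum>i<Suc n. if i = 0 then cofactor Q 0 0 else 0)"
    by (intro sum.cong) (auto simp: Q_def)
  also have "\<dots> = det (mat_delete Q 0 0)"
    by (simp add: cofactor_def)
  also have "mat_delete Q 0 0 =
      mat n n (\<lambda>(i,k). (of_int (y (Suc i)) gchoose Suc k) - (of_int (y i) gchoose Suc k))"
    by (rule eq_matI) (auto simp: mat_delete_def Q_def)
  finally show ?thesis .
qed

lemma det_binom_mat_branching: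
  assumes "\<And>i. i < n \<Longrightarrow> y i \<le> y (Suc i)"
  shows "(\<Sum>z\<in>PiE {..<n} (\<lambda>i. {y i..<y (Suc i)}). det (binom_mat n z)) = det (binom_mat (Suc n) y)"
  using sum_det_binom_mat_PiE[of n y, OF assms] det_binom_mat_Suc_diff by simp

section \<open>Level-set decomposition of the interlacing defect\<close>

definition count_above :: "int list \<Rightarrow> int \<Rightarrow> int" where
  "count_above a s = int (length (filter (\<lambda>x. s < x) a))"

definition count_gap :: "int list \<Rightarrow> int list \<Rightarrow> int \<Rightarrow> int" where
  "count_gap a b s = count_above a s - count_above b s"

definition abs_pair_sum :: "int list \<Rightarrow> int list \<Rightarrow> int" where
  "abs_pair_sum a b = (\<Sum>i<length a. \<Sum>i'<length b. \<bar>a ! i - b ! i'\<bar>)"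

definition interlace_defect :: "int list \<Rightarrow> int list \<Rightarrow> int" where
  "interlace_defect a b = 2 * abs_pair_sum a b - abs_pair_sum a a - abs_pair_sum b b"

lemma count_above_eq_card: "count_above a s = int (card {i. i < length a \<and> s < a ! i})"
  by (simp add: count_above_def length_filter_conv_card)

lemma sum_indicator_eq_card:
  "(\<Sum>i<(m::nat). if P i then 1 else 0 :: int) = int (card {i. i < m \<and> P i})"
proof -
  have "(\<Sum>i<m. if P i then 1 else 0 :: int) = (\<Sum>i\<in>{i. i < m \<and> P i}. 1)"
    by (intro sum.mono_neutral_cong_right) auto
  then show ?thesis by simp
qed

lemma sum_indicator_not_eq_card:
  "(\<Sum>i<(m::nat). if P i then 0 else 1 :: int) = int m - int (card {i. i < m \<and> P i})"
proof -
  have "(\<Sum>i<m. if P i then 0 else 1 :: int) = (\<Sum>i<m. 1 - (if P i then 1 else 0))"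
    by (intro sum.cong) auto
  then show ?thesis by (simp add: sum_subtractf sum_indicator_eq_card)
qed

lemma abs_diff_eq_sum_levels:
  fixes x y L U :: int
  assumes "L \<le> x" "L \<le> y" "x \<le> U" "y \<le> U"
  shows "\<bar>x - y\<bar> = (\<Sum>s\<in>{L..<U}. if (s < x) \<noteq> (s < y) then 1 else 0)"
proof -
  have "(\<Sum>s\<in>{L..<U}. if (s < x) \<noteq> (s < y) then 1 else 0) =
      (\<Sum>s\<in>{min x y..<max x y}. (if (s < x) \<noteq> (s < y) then 1 else 0 :: int))"
    using assms by (intro sum.mono_neutral_cong_right) auto
  also have "\<dots> = (\<Sum>s\<in>{min x y..<max x y}. 1)"
    by (intro sum.cong) auto
  finally show ?thesis by (simp add: min_def max_def abs_if)
qed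

lemma abs_pair_sum_levels:
  assumes "\<forall>x\<in>set a \<union> set b. \<bar>x\<bar> \<le> R"
  shows "abs_pair_sum a b = (\<Sum>s\<in>{-R..R}. count_above a s * (int (length b) - count_above b s)
    + (int (length a) - count_above a s) * count_above b s)"
proof -
  have bnd: "-R \<le> x \<and> x \<le> R + 1" if "x \<in> set a \<union> set b" for x
    using bspec[OF assms that] by linarith
  have "abs_pair_sum a b = (\<Sum>i<length a. \<Sum>i'<length b. \<Sum>s\<in>{-R..<R+1}.
      if (s < a!i) \<noteq> (s < b!i') then 1 else 0)"
    unfolding abs_pair_sum_def using bnd by (intro sum.cong refl abs_diff_eq_sum_levels) (auto simp: nth_mem)
  also have "\<dots> = (\<Sum>s\<in>{-R..R}. \<Sum>i<length a. \<Sum>i'<length b. if (s < a!i) \<noteq> (s < b!i') then 1 else 0)"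
    unfolding atLeastLessThanPlusOne_atLeastAtMost_int
    by (subst sum.swap) (simp add: sum.swap[of _ "{..<length b}"])
  also have "\<dots> = (\<Sum>s\<in>{-R..R}. count_above a s * (int (length b) - count_above b s)
      + (int (length a) - count_above a s) * count_above b s)"
  proof (intro sum.cong refl)
    fix s
    have "(\<Sum>i<length a. \<Sum>i'<length b. if (s < a!i) \<noteq> (s < b!i') then 1 else 0 :: int) =
      (\<Sum>i<length a. \<Sum>i'<length b. (if s < a!i then 1 else 0) * (if s < b!i' then 0 else 1)
        + (if s < a!i then 0 else 1) * (if s < b!i' then 1 else 0))"
      by (intro sum.cong) auto
    also have "\<dots> = (\<Sum>i<length a. if s < a!i then 1 else 0) * (\<Sum>i'<length b. if s < b!i' then 0 else 1)
        + (\<Sum>i<length a. if s < a!i then 0 else 1) * (\<Sum>i'<length b. if s < b!i' then 1 else 0)"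
      by (simp add: sum.distrib sum_product)
    finally show "(\<Sum>i<length a. \<Sum>i'<length b. if (s < a!i) \<noteq> (s < b!i') then 1 else 0) =
        count_above a s * (int (length b) - count_above b s) + (int (length a) - count_above a s) * count_above b s"
      unfolding sum_indicator_eq_card sum_indicator_not_eq_card count_above_eq_card .
  qed
  finally show ?thesis .
qed

lemma interlace_defect_levels:
  assumes "length a = Suc (length b)" and "\<forall>x\<in>set a \<union> set b. \<bar>x\<bar> \<le> R"
  shows "interlace_defect a b = (\<Sum>s\<in>{-R..R}. 2 * (count_gap a b s * (count_gap a b s - 1)))"
proof -
  let ?a = "count_above a" and ?b = "count_above b" and ?la = "int (length a)" and ?lb = "int (length b)"
  have "interlace_defect a b = (\<Sum>s\<in>{-R..R}. 2 * (?a s * (?lb - ?b s) + (?la - ?a s) * ?b s)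
      - (?a s * (?la - ?a s) + (?la - ?a s) * ?a s) - (?b s * (?lb - ?b s) + (?lb - ?b s) * ?b s))"
    using assms(2) unfolding interlace_defect_def
    by (simp add: abs_pair_sum_levels[of a b R] abs_pair_sum_levels[of a a R]
        abs_pair_sum_levels[of b b R] sum_subtractf sum_distrib_left)
  also have "\<dots> = (\<Sum>s\<in>{-R..R}. 2 * (count_gap a b s * (count_gap a b s - 1)))"
    using assms(1) by (intro sum.cong refl) (simp add: count_gap_def algebra_simps)
  finally show ?thesis .
qed

lemma exists_abs_bound: "\<exists>R. \<forall>x\<in>A. \<bar>x\<bar> \<le> (R::int)" if "finite A"
  using that by (intro exI[of _ "Max (abs ` A)"]) auto

lemma mult_pred_nonneg: "0 \<le> (x::int) * (x - 1)"
  by (cases "x \<ge> 1") (simp_all add: mult_nonpos_nonpos)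

lemma two_le_mult_pred: "(x::int) \<notin> {0, 1} \<Longrightarrow> 2 \<le> x * (x - 1)"
proof -
  assume "x \<notin> {0, 1}"
  then consider "x \<le> -1" | "2 \<le> x" by fastforce
  then show ?thesis
  proof cases
    case 1
    then have "(-1) * (x - 1) \<le> x * (x - 1)" by (intro mult_right_mono_neg) auto
    then show ?thesis using 1 by simp
  next
    case 2
    then have "2 * 1 \<le> x * (x - 1)" by (intro mult_mono) auto
    then show ?thesis by simp
  qed
qed

lemma interlace_defect_nonneg:
  assumes "length a = Suc (length b)"
  shows "0 \<le> interlace_defect a b"
proof -
  obtain R where "\<forall>x\<in>set a \<union> set b. \<bar>x\<bar> \<le> R" using exists_abs_bound by blast
  then show ?thesis
    using assms by (simp add: interlace_defect_levels sum_nonneg mult_pred_nonneg)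
qed

lemma card_le_interlace_defect:
  assumes "length a = Suc (length b)" and "\<forall>x\<in>set a \<union> set b. \<bar>x\<bar> \<le> R"
    and "S \<subseteq> {-R..R}" and "\<forall>s\<in>S. count_gap a b s \<notin> {0, 1}"
  shows "int (card S) \<le> interlace_defect a b"
proof -
  let ?t = "\<lambda>s. 2 * (count_gap a b s * (count_gap a b s - 1))"
  have "int (card S) = (\<Sum>s\<in>S. 1)" by simp
  also have "\<dots> \<le> (\<Sum>s\<in>S. ?t s)"
    using assms(4) two_le_mult_pred by (intro sum_mono) fastforce
  also have "\<dots> \<le> (\<Sum>s\<in>{-R..R}. ?t s)"
    using assms(3) by (intro sum_mono2) (auto simp: mult_pred_nonneg)
  finally show ?thesis
    using interlace_defect_levels[OF assms(1,2)] by simp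
qed

lemma count_gap_above_range:
  assumes "\<forall>y\<in>set a. y \<le> s" "x \<in> set b" "s < x"
  shows "count_gap a b s < 0"
proof -
  have "count_above a s = 0" using assms(1) by (auto simp: count_above_def filter_empty_conv)
  moreover have "0 < count_above b s" using assms(2,3) by (auto simp: count_above_def filter_empty_conv)
  ultimately show ?thesis by (simp add: count_gap_def)
qed

lemma count_gap_below_range:
  assumes "length a = Suc (length b)" "\<forall>y\<in>set a. s < y" "x \<in> set b" "x \<le> s"
  shows "1 < count_gap a b s"
proof -
  have "count_above a s = int (length a)" using assms(2) by (simp add: count_above_def)
  moreover have "count_above b s < int (length b)"
    using assms(3,4) by (auto simp: count_above_def intro!: length_filter_less)
  ultimately show ?thesis using assms(1) by (simp add: count_gap_def)
qed

text \<open>An entry of \<open>b\<close> at distance \<open>d\<close> outside the range of \<open>a\<close> forces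
  \<open>d\<close> levels at which the counts differ by the wrong amount.\<close>
lemma abs_le_interlace_defect:
  assumes len: "length a = Suc (length b)" and R0: "\<forall>x\<in>set a. \<bar>x\<bar> \<le> R0" and x: "x \<in> set b"
  shows "\<bar>x\<bar> \<le> R0 + interlace_defect a b"
proof -
  obtain R where R: "\<forall>x\<in>set a \<union> set b. \<bar>x\<bar> \<le> R" using exists_abs_bound by blast
  have "a \<noteq> []" using len by auto
  then have "0 \<le> R0" using R0 by (auto simp: neq_Nil_conv)
  have xR: "\<bar>x\<bar> \<le> R" using R x by blast
  consider "\<bar>x\<bar> \<le> R0" | "R0 < x" | "x < - R0" by linarith
  then show ?thesis
  proof cases
    case 1
    then show ?thesis using interlace_defect_nonneg[OF len] by simp
  next
    case 2
    have "\<forall>s\<in>{R0..<x}. count_gap a b s < 0"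
      using R0 x by (auto intro!: count_gap_above_range simp: abs_le_iff)
    then have "int (card {R0..<x}) \<le> interlace_defect a b"
      using \<open>0 \<le> R0\<close> xR by (intro card_le_interlace_defect[OF len R]) fastforce+
    then show ?thesis using 2 \<open>0 \<le> R0\<close> by (simp add: abs_if)
  next
    case 3
    have "\<forall>s\<in>{x..<-R0}. 1 < count_gap a b s"
      using R0 x by (auto intro!: count_gap_below_range[OF len] simp: abs_le_iff)
    then have "int (card {x..<-R0}) \<le> interlace_defect a b"
      using \<open>0 \<le> R0\<close> xR by (intro card_le_interlace_defect[OF len R]) fastforce+
    then show ?thesis using 3 \<open>0 \<le> R0\<close> by (simp add: abs_if)
  qed
qed

definition interlace :: "int list \<Rightarrow> int list \<Rightarrow> bool" where
  "interlace a b \<longleftrightarrow> length a = Suc (length b) \<and>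
     (\<forall>i<length b. a ! Suc i \<le> b ! i \<and> b ! i \<le> a ! i)"

lemma interlace_count_gap:
  assumes "interlace a b"
  shows "count_gap a b s \<in> {0, 1}"
proof -
  let ?A = "{i. i < length a \<and> s < a!i}" and ?B = "{i. i < length b \<and> s < b!i}"
  have len: "length a = Suc (length b)"
    and il: "\<And>i. i < length b \<Longrightarrow> a ! Suc i \<le> b ! i \<and> b ! i \<le> a ! i"
    using assms by (auto simp: interlace_def)
  have "?B \<subseteq> ?A"
    using len il by fastforce
  then have lower: "count_above b s \<le> count_above a s"
    unfolding count_above_eq_card by (intro of_nat_mono card_mono) auto
  have "?A \<subseteq> insert 0 (Suc ` ?B)"
  proof
    fix k assume k: "k \<in> ?A"
    show "k \<in> insert 0 (Suc ` ?B)"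
    proof (cases k)
      case (Suc k')
      then show ?thesis using k len il[of k'] by force
    qed simp
  qed
  then have "card ?A \<le> card (insert 0 (Suc ` ?B))"
    by (intro card_mono) auto
  also have "\<dots> \<le> Suc (card (Suc ` ?B))"
    by (rule card_insert_le_m1) auto
  also have "card (Suc ` ?B) = card ?B"
    by (rule card_image) auto
  finally have upper: "count_above a s \<le> count_above b s + 1"
    unfolding count_above_eq_card by simp
  show ?thesis using lower upper by (auto simp: count_gap_def)
qed

lemma sorted_wrt_ge_nth_mono:
  fixes xs :: "'a::order list"
  assumes "sorted_wrt (\<ge>) xs" "i \<le> j" "j < length xs"
  shows "xs ! j \<le> xs ! i"
  using assms sorted_wrt_nth_less[OF assms(1), of i j] by (cases "i = j") auto

lemma count_above_le_index:
  assumes "sorted_wrt (\<ge>) a" "i < length a" "a ! i \<le> s"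
  shows "count_above a s \<le> int i"
proof -
  have "k < i" if "k < length a" "s < a ! k" for k
  proof (rule ccontr)
    assume "\<not> k < i"
    then have "a ! k \<le> a ! i" using sorted_wrt_ge_nth_mono[OF assms(1)] that(1) by simp
    then show False using assms(3) that(2) by simp
  qed
  then have "{k. k < length a \<and> s < a ! k} \<subseteq> {..<i}" by blast
  then have "card {k. k < length a \<and> s < a ! k} \<le> card {..<i}" by (intro card_mono) auto
  then show ?thesis unfolding count_above_eq_card by simp
qed

lemma index_lt_count_above:
  assumes "sorted_wrt (\<ge>) a" "i < length a" "s < a ! i"
  shows "int i + 1 \<le> count_above a s"
proof -
  have "{..i} \<subseteq> {k. k < length a \<and> s < a ! k}"
    using assms sorted_wrt_ge_nth_mono[OF assms(1)] by fastforce
  then have "card {..i} \<le> card {k. k < length a \<and> s < a ! k}" by (intro card_mono) auto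
  then show ?thesis unfolding count_above_eq_card by simp
qed

lemma interlaceI_count_gap:
  assumes len: "length a = Suc (length b)" and a: "sorted_wrt (\<ge>) a" and b: "sorted_wrt (\<ge>) b"
    and gap: "\<forall>s\<in>set a \<union> set b. count_gap a b s \<in> {0, 1}"
  shows "interlace a b"
  unfolding interlace_def
proof (intro conjI len allI impI)
  fix i assume i: "i < length b"
  show "b ! i \<le> a ! i"
  proof (rule ccontr)
    assume "\<not> b ! i \<le> a ! i"
    then have "count_above a (a ! i) \<le> int i" "int i + 1 \<le> count_above b (a ! i)"
      using i len count_above_le_index[OF a, of i] index_lt_count_above[OF b, of i] by simp_all
    moreover have "count_gap a b (a ! i) \<in> {0, 1}" using gap i len by (simp add: nth_mem)
    ultimately show False by (auto simp: count_gap_def)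
  qed
  show "a ! Suc i \<le> b ! i"
  proof (rule ccontr)
    assume "\<not> a ! Suc i \<le> b ! i"
    then have "count_above b (b ! i) \<le> int i" "int (Suc i) + 1 \<le> count_above a (b ! i)"
      using i len count_above_le_index[OF b, of i] index_lt_count_above[OF a, of "Suc i"] by simp_all
    moreover have "count_gap a b (b ! i) \<in> {0, 1}" using gap i by (simp add: nth_mem)
    ultimately show False by (auto simp: count_gap_def)
  qed
qed

lemma interlace_defect_eq_0_iff:
  assumes len: "length a = Suc (length b)" and "sorted_wrt (\<ge>) a" "sorted_wrt (\<ge>) b"
  shows "interlace_defect a b = 0 \<longleftrightarrow> interlace a b"
proof -
  obtain R where R: "\<forall>x\<in>set a \<union> set b. \<bar>x\<bar> \<le> R" using exists_abs_bound by blast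
  have "interlace_defect a b = 0 \<longleftrightarrow> (\<forall>s\<in>{-R..R}. count_gap a b s * (count_gap a b s - 1) = 0)"
    unfolding interlace_defect_levels[OF len R]
    by (subst sum_nonneg_eq_0_iff) (auto simp: mult_pred_nonneg)
  also have "\<dots> \<longleftrightarrow> (\<forall>s\<in>{-R..R}. count_gap a b s \<in> {0, 1})"
    by auto
  also have "\<dots> \<longleftrightarrow> interlace a b"
  proof
    assume "\<forall>s\<in>{-R..R}. count_gap a b s \<in> {0, 1}"
    moreover have "set a \<union> set b \<subseteq> {-R..R}"
    proof
      fix x assume "x \<in> set a \<union> set b"
      then have "\<bar>x\<bar> \<le> R" using R by blast
      then show "x \<in> {-R..R}" by (simp add: abs_le_iff)
    qed
    ultimately show "interlace a b" using assms by (intro interlaceI_count_gap) auto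
  qed (use interlace_count_gap in blast)
  finally show ?thesis .
qed

section \<open>The exponent \<open>2\<Delta>\<close>\<close>

lemma sum_pairs_eq_twice_upper:
  fixes h :: "nat \<Rightarrow> nat \<Rightarrow> int"
  assumes "\<And>i j. h i j = h j i" "\<And>i. h i i = 0"
  shows "(\<Sum>i<n. \<Sum>i'<n. h i i') = 2 * (\<Sum>i<n. \<Sum>i'<n. if i < i' then h i i' else 0)"
proof (induction n)
  case (Suc n)
  have "(\<Sum>i'<n. h n i') = (\<Sum>i<n. h i n)" using assms(1) by simp
  then show ?case using Suc assms(2) by (simp add: sum.distrib)
qed simp

lemma sum_upper_pairs_diff:
  fixes f :: "nat \<Rightarrow> int"
  shows "(\<Sum>i<n. \<Sum>i'<n. if i < i' then f i - f i' else 0) = (\<Sum>i<n. (int n - 1 - 2 * int i) * f i)"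
proof (induction n)
  case (Suc n)
  have "(\<Sum>i<n. (int (Suc n) - 1 - 2 * int i) * f i) = (\<Sum>i<n. (int n - 1 - 2 * int i) * f i + f i)"
    by (intro sum.cong refl) (simp add: algebra_simps)
  then show ?case
    using Suc by (simp add: sum.distrib sum_subtractf algebra_simps)
qed simp

definition spread :: "int list \<Rightarrow> int" where
  "spread mu = (\<Sum>i<length mu. \<Sum>i'<length mu. if i < i' then \<bar>mu ! i - mu ! i'\<bar> else 0)"

lemma abs_pair_sum_self: "abs_pair_sum mu mu = 2 * spread mu"
  unfolding abs_pair_sum_def spread_def by (rule sum_pairs_eq_twice_upper) auto

lemma spread_dominant:
  assumes "dominant N lam"
  shows "spread lam = int (N - 1) * size_cw lam - 2 * n_cw lam"
proof -
  have len: "length lam = N" and s: "\<And>i j. i < j \<Longrightarrow> j < N \<Longrightarrow> lam ! j \<le> lam ! i"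
    using assms by (auto simp: dominant_def sorted_wrt_iff_nth_less)
  have "spread lam = (\<Sum>i<N. \<Sum>i'<N. if i < i' then lam ! i - lam ! i' else 0)"
    unfolding spread_def len by (intro sum.cong refl) (auto dest: s)
  also have "\<dots> = (\<Sum>i<N. (int N - 1 - 2 * int i) * lam ! i)"
    by (rule sum_upper_pairs_diff)
  also have "\<dots> = (int N - 1) * (\<Sum>i<N. lam ! i) - 2 * (\<Sum>i<N. int i * lam ! i)"
    by (simp add: algebra_simps sum_subtractf sum_distrib_left sum.distrib)
  also have "\<dots> = int (N - 1) * size_cw lam - 2 * n_cw lam"
    using len by (cases N) (simp_all add: size_cw_def n_cw_def sum_list_sum_nth atLeast0LessThan)
  finally show ?thesis .
qed

lemma tuples_level_dominant:
  assumes "ls \<in> tuples N" "dominant N lam" "j \<le> N - 1"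
  shows "dominant (N - j) ((lam # ls) ! j)"
proof (cases j)
  case (Suc j')
  then have "j \<in> {1..N-1}" using assms(3) by auto
  then have "dominant (N - j) (ls ! (j - 1))" using assms(1) by (simp add: tuples_def)
  then show ?thesis using Suc by simp
qed (use assms in simp)

lemma tuples_level_length:
  assumes "ls \<in> tuples N" "dominant N lam" "j \<in> {1..N-1}"
  shows "length ((lam # ls) ! (j - 1)) = Suc (length ((lam # ls) ! j))"
  using assms tuples_level_dominant[OF assms(1,2), of "j - 1"] tuples_level_dominant[OF assms(1,2), of j]
  by (auto simp: dominant_def)

text \<open>The second sum in \<open>2\<Delta>\<close> telescopes against the diagonal terms of the
  interlacing defects, leaving only the spread of \<open>\<lambda> = \<lambda>\<^sup>0\<close>; the last level
  \<open>\<lambda>\<^sup>N\<^sup>-\<^sup>1\<close> has a single entry.\<close>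
lemma twoDelta_eq_spread_plus_defects:
  assumes N: "N \<ge> 1" and dom: "dominant N lam" and ls: "ls \<in> tuples N"
  shows "2 * twoDelta lam ls =
    2 * spread lam + (\<Sum>j\<in>{1..N-1}. interlace_defect ((lam # ls) ! (j - 1)) ((lam # ls) ! j))"
proof -
  define L where "L = (\<lambda>j. (lam # ls) ! j)"
  have lenL: "length (L j) = N - j" if "j \<le> N - 1" for j
    using tuples_level_dominant[OF ls dom that] by (simp add: L_def dominant_def)
  have pairs: "(\<Sum>j\<in>{1..N-1}. \<Sum>i<N-j+1. \<Sum>i'<N-j. \<bar>L (j-1) ! i - L j ! i'\<bar>) =
      (\<Sum>j\<in>{1..N-1}. abs_pair_sum (L (j - 1)) (L j))"
  proof (intro sum.cong refl)
    fix j assume "j \<in> {1..N-1}"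
    then have "length (L (j - 1)) = N - j + 1" "length (L j) = N - j"
      using lenL[of "j - 1"] lenL[of j] by auto
    then show "(\<Sum>i<N-j+1. \<Sum>i'<N-j. \<bar>L (j-1) ! i - L j ! i'\<bar>) = abs_pair_sum (L (j - 1)) (L j)"
      by (simp add: abs_pair_sum_def)
  qed
  have spreads: "(\<Sum>j\<in>{1..N-1}. \<Sum>i<N-j. \<Sum>i'<N-j. if i < i' then \<bar>L j ! i - L j ! i'\<bar> else 0) =
      (\<Sum>j\<in>{1..N-1}. spread (L j))"
    using lenL by (intro sum.cong refl) (simp add: spread_def)
  have td: "twoDelta lam ls =
      (\<Sum>j\<in>{1..N-1}. abs_pair_sum (L (j - 1)) (L j)) - 2 * (\<Sum>j\<in>{1..N-1}. spread (L j))"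
    using dom unfolding twoDelta_def Let_def L_def[symmetric] pairs[symmetric] spreads[symmetric]
    by (simp add: dominant_def)
  have telescope: "(\<Sum>j\<in>{1..M}. spread (L (j - 1)) - spread (L j)) = spread (L 0) - spread (L M)" for M
    by (induction M) auto
  have "spread (L (N - 1)) = 0"
    using lenL[of "N - 1"] N by (simp add: spread_def)
  moreover have "L 0 = lam" by (simp add: L_def)
  ultimately have tel: "(\<Sum>j\<in>{1..N-1}. spread (L (j - 1))) = spread lam + (\<Sum>j\<in>{1..N-1}. spread (L j))"
    using telescope[of "N - 1"] by (simp add: sum_subtractf)
  have "(\<Sum>j\<in>{1..N-1}. interlace_defect (L (j - 1)) (L j)) = 2 * (\<Sum>j\<in>{1..N-1}. abs_pair_sum (L (j - 1)) (L j))
      - 2 * (\<Sum>j\<in>{1..N-1}. spread (L (j - 1))) - 2 * (\<Sum>j\<in>{1..N-1}. spread (L j))"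
    by (simp add: interlace_defect_def abs_pair_sum_self sum_subtractf sum_distrib_left)
  then show ?thesis
    unfolding L_def[symmetric] using td tel by linarith
qed

lemma tuples_interlace_defect_nonneg:
  assumes "dominant N lam" "ls \<in> tuples N" "j \<in> {1..N-1}"
  shows "0 \<le> interlace_defect ((lam # ls) ! (j - 1)) ((lam # ls) ! j)"
  using interlace_defect_nonneg tuples_level_length[OF assms(2,1,3)] by blast

lemma spread_le_twoDelta:
  assumes "N \<ge> 1" "dominant N lam" "ls \<in> tuples N"
  shows "spread lam \<le> twoDelta lam ls"
proof -
  have "0 \<le> (\<Sum>j\<in>{1..N-1}. interlace_defect ((lam # ls) ! (j - 1)) ((lam # ls) ! j))"
    by (intro sum_nonneg tuples_interlace_defect_nonneg[OF assms(2,3)])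
  then show ?thesis using twoDelta_eq_spread_plus_defects[OF assms] by linarith
qed

lemma twoDelta_le_spread_iff:
  assumes "N \<ge> 1" and dom: "dominant N lam" and ls: "ls \<in> tuples N"
  shows "twoDelta lam ls \<le> spread lam \<longleftrightarrow>
    (\<forall>j\<in>{1..N-1}. interlace ((lam # ls) ! (j - 1)) ((lam # ls) ! j))"
proof -
  let ?D = "\<lambda>j. interlace_defect ((lam # ls) ! (j - 1)) ((lam # ls) ! j)"
  have "twoDelta lam ls \<le> spread lam \<longleftrightarrow> (\<Sum>j\<in>{1..N-1}. ?D j) = 0"
    using twoDelta_eq_spread_plus_defects[OF assms] spread_le_twoDelta[OF assms] by auto
  also have "\<dots> \<longleftrightarrow> (\<forall>j\<in>{1..N-1}. ?D j = 0)"
    using tuples_interlace_defect_nonneg[OF dom ls] by (intro sum_nonneg_eq_0_iff) auto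
  also have "\<dots> \<longleftrightarrow> (\<forall>j\<in>{1..N-1}. interlace ((lam # ls) ! (j - 1)) ((lam # ls) ! j))"
  proof (intro ball_cong refl)
    fix j assume j: "j \<in> {1..N-1}"
    have sorted: "sorted_wrt (\<ge>) ((lam # ls) ! i)" if "i \<le> N - 1" for i
      using tuples_level_dominant[OF ls dom that] by (simp add: dominant_def)
    show "?D j = 0 \<longleftrightarrow> interlace ((lam # ls) ! (j - 1)) ((lam # ls) ! j)"
      by (rule interlace_defect_eq_0_iff[OF tuples_level_length[OF ls dom j] sorted sorted])
        (use j in auto)
  qed
  finally show ?thesis .
qed

lemma tuples_entries_bounded:
  assumes N: "N \<ge> 1" and dom: "dominant N lam" and ls: "ls \<in> tuples N"
    and R0: "\<forall>x\<in>set lam. \<bar>x\<bar> \<le> R0" and j: "j \<le> N - 1"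
  shows "\<forall>x\<in>set ((lam # ls) ! j). \<bar>x\<bar> \<le> R0 + int j * (2 * (twoDelta lam ls - spread lam))"
  using j
proof (induction j)
  case 0
  then show ?case using R0 by simp
next
  case (Suc j)
  let ?D = "\<lambda>j. interlace_defect ((lam # ls) ! (j - 1)) ((lam # ls) ! j)"
  have j: "Suc j \<in> {1..N-1}" using Suc.prems by auto
  have "?D (Suc j) \<le> (\<Sum>j\<in>{1..N-1}. ?D j)"
    using tuples_interlace_defect_nonneg[OF dom ls] by (intro member_le_sum j) auto
  then have "?D (Suc j) \<le> 2 * (twoDelta lam ls - spread lam)"
    using twoDelta_eq_spread_plus_defects[OF N dom ls] by simp
  then show ?case
    using abs_le_interlace_defect[OF tuples_level_length[OF ls dom j]] Suc
    by (fastforce simp: algebra_simps)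
qed

lemma finite_tuples_twoDelta_le:
  assumes N: "N \<ge> 1" and dom: "dominant N lam"
  shows "finite {ls\<in>tuples N. twoDelta lam ls \<le> k}"
proof -
  obtain R0 where R0: "\<forall>x\<in>set lam. \<bar>x\<bar> \<le> R0" using exists_abs_bound by blast
  define B where "B = R0 + int N * (2 * (k - spread lam))"
  have "{ls\<in>tuples N. twoDelta lam ls \<le> k} \<subseteq>
      {ls. set ls \<subseteq> {l. set l \<subseteq> {-B..B} \<and> length l \<le> N} \<and> length ls \<le> N}"
  proof safe
    fix ls assume ls: "ls \<in> tuples N" and le: "twoDelta lam ls \<le> k"
    show "length ls \<le> N" using ls by (simp add: tuples_def)
    fix l assume "l \<in> set ls"
    then obtain j where j: "j < length ls" "ls ! j = l" by (auto simp: in_set_conv_nth)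
    then have jN: "Suc j \<le> N - 1" using ls by (simp add: tuples_def)
    show "length l \<le> N"
      using tuples_level_dominant[OF ls dom jN] j by (simp add: dominant_def)
    have "int (Suc j) * (2 * (twoDelta lam ls - spread lam)) \<le> int N * (2 * (k - spread lam))"
      using spread_le_twoDelta[OF N dom ls] le jN by (intro mult_mono) auto
    then show "x \<in> {-B..B}" if "x \<in> set l" for x
      using tuples_entries_bounded[OF N dom ls R0 jN] that j by (force simp: B_def abs_le_iff)
  qed
  moreover have "finite {ls. set ls \<subseteq> {l. set l \<subseteq> {-B..B} \<and> length l \<le> N} \<and> length ls \<le> N}"
    by (intro finite_lists_length_le) (auto intro: finite_lists_length_le)
  ultimately show ?thesis by (rule finite_subset)
qed

section \<open>Gelfand--Tsetlin patterns\<close>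

definition gt_patterns :: "nat \<Rightarrow> int list \<Rightarrow> int list list set" where
  "gt_patterns N lam =
    {ls \<in> tuples N. \<forall>j\<in>{1..N-1}. interlace ((lam # ls) ! (j - 1)) ((lam # ls) ! j)}"

lemma tuples_twoDelta_le_spread:
  assumes "N \<ge> 1" "dominant N lam"
  shows "{ls\<in>tuples N. twoDelta lam ls \<le> spread lam} = gt_patterns N lam"
  using twoDelta_le_spread_iff[OF assms] unfolding gt_patterns_def by blast

lemma finite_gt_patterns:
  assumes "N \<ge> 1" "dominant N lam"
  shows "finite (gt_patterns N lam)"
  using finite_tuples_twoDelta_le[OF assms] tuples_twoDelta_le_spread[OF assms] by metis

lemma ball_atLeastAtMost_Suc_split:
  assumes "n \<ge> 1"
  shows "(\<forall>j\<in>{1..n}. P j) \<longleftrightarrow> P 1 \<and> (\<forall>j\<in>{1..n-1}. P (Suc j))"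
proof -
  have "{1..n} = insert 1 (Suc ` {1..n-1})"
    using assms by (auto simp: image_iff)
  then show ?thesis by (simp del: image_Suc_atLeastAtMost)
qed

lemma tuples_Cons:
  assumes "n \<ge> 1"
  shows "mu # rest \<in> tuples (Suc n) \<longleftrightarrow> dominant n mu \<and> rest \<in> tuples n"
proof -
  have "(\<forall>j\<in>{1..n}. dominant (Suc n - j) ((mu # rest) ! (j - 1))) \<longleftrightarrow>
      dominant n mu \<and> (\<forall>j\<in>{1..n-1}. dominant (n - j) (rest ! (j - 1)))"
    by (subst ball_atLeastAtMost_Suc_split[OF assms]) (simp add: nth_Cons')
  then show ?thesis
    using assms unfolding tuples_def by auto
qed

lemma interlace_dominant:
  assumes "dominant (Suc n) lam" "interlace lam mu"
  shows "dominant n mu"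
proof -
  have len: "length mu = n"
    and il: "\<And>i. i < n \<Longrightarrow> lam ! Suc i \<le> mu ! i \<and> mu ! i \<le> lam ! i"
    using assms by (auto simp: interlace_def dominant_def)
  have "mu ! j \<le> mu ! i" if "i < j" "j < n" for i j
  proof -
    have "mu ! j \<le> lam ! j" using il[of j] that by simp
    also have "lam ! j \<le> lam ! Suc i"
      using assms(1) that by (intro sorted_wrt_ge_nth_mono) (auto simp: dominant_def)
    also have "lam ! Suc i \<le> mu ! i" using il[of i] that by simp
    finally show ?thesis .
  qed
  then show ?thesis using len by (auto simp: dominant_def sorted_wrt_iff_nth_less)
qed

lemma gt_patterns_Cons:
  assumes "n \<ge> 1"
  shows "mu # rest \<in> gt_patterns (Suc n) lam \<longleftrightarrow>
    interlace lam mu \<and> dominant n mu \<and> rest \<in> gt_patterns n mu"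
proof -
  have "(\<forall>j\<in>{1..n}. interlace ((lam # mu # rest) ! (j - 1)) ((lam # mu # rest) ! j)) \<longleftrightarrow>
      interlace lam mu \<and> (\<forall>j\<in>{1..n-1}. interlace ((mu # rest) ! (j - 1)) ((mu # rest) ! j))"
    by (subst ball_atLeastAtMost_Suc_split[OF assms]) (simp add: nth_Cons')
  then show ?thesis
    unfolding gt_patterns_def using tuples_Cons[OF assms] by auto
qed

lemma gt_patterns_Suc:
  assumes "n \<ge> 1" and "dominant (Suc n) lam"
  shows "gt_patterns (Suc n) lam = (\<Union>mu\<in>{mu. interlace lam mu}. Cons mu ` gt_patterns n mu)"
proof safe
  fix ls assume ls: "ls \<in> gt_patterns (Suc n) lam"
  then have "length ls = n" by (simp add: gt_patterns_def tuples_def)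
  then obtain mu rest where "ls = mu # rest" using assms(1) by (cases ls) auto
  then show "ls \<in> (\<Union>mu\<in>{mu. interlace lam mu}. Cons mu ` gt_patterns n mu)"
    using ls gt_patterns_Cons[OF assms(1)] by auto
next
  fix mu rest assume "interlace lam mu" "rest \<in> gt_patterns n mu"
  then show "mu # rest \<in> gt_patterns (Suc n) lam"
    using gt_patterns_Cons[OF assms(1)] interlace_dominant[OF assms(2)] by auto
qed

text \<open>In the coordinates \<open>y\<^sub>i = i - \<lambda>\<^sub>i\<close> the interlacing condition
  \<open>\<lambda>\<^sub>i\<^sub>+\<^sub>1 \<le> \<mu>\<^sub>i \<le> \<lambda>\<^sub>i\<close> becomes \<open>y\<^sub>i \<le> i - \<mu>\<^sub>i < y\<^sub>i\<^sub>+\<^sub>1\<close>, a product of intervals.\<close>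
definition shifted_coord :: "int list \<Rightarrow> nat \<Rightarrow> int" where
  "shifted_coord lam i = int i - lam ! i"

lemma interlace_bij_PiE:
  assumes "length lam = Suc n"
  shows "bij_betw (\<lambda>mu. restrict (shifted_coord mu) {..<n}) {mu. interlace lam mu}
    (PiE {..<n} (\<lambda>i. {shifted_coord lam i..<shifted_coord lam (Suc i)}))"
proof (rule bij_betw_imageI)
  show "inj_on (\<lambda>mu. restrict (shifted_coord mu) {..<n}) {mu. interlace lam mu}"
  proof (rule inj_onI)
    fix mu mu' assume "mu \<in> {mu. interlace lam mu}" "mu' \<in> {mu. interlace lam mu}"
      and eq: "restrict (shifted_coord mu) {..<n} = restrict (shifted_coord mu') {..<n}"
    then have "length mu = n" "length mu' = n" using assms by (auto simp: interlace_def)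
    moreover have "mu ! i = mu' ! i" if "i < n" for i
      using fun_cong[OF eq, of i] that by (simp add: shifted_coord_def)
    ultimately show "mu = mu'" by (intro nth_equalityI) auto
  qed
  show "(\<lambda>mu. restrict (shifted_coord mu) {..<n}) ` {mu. interlace lam mu} =
      PiE {..<n} (\<lambda>i. {shifted_coord lam i..<shifted_coord lam (Suc i)})"
  proof (intro equalityI subsetI)
    fix z assume "z \<in> (\<lambda>mu. restrict (shifted_coord mu) {..<n}) ` {mu. interlace lam mu}"
    then obtain mu where "interlace lam mu" and z: "z = restrict (shifted_coord mu) {..<n}"
      by blast
    then show "z \<in> PiE {..<n} (\<lambda>i. {shifted_coord lam i..<shifted_coord lam (Suc i)})"
      unfolding z restrict_PiE_iff using assms by (auto simp: interlace_def shifted_coord_def)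
  next
    fix z assume z: "z \<in> PiE {..<n} (\<lambda>i. {shifted_coord lam i..<shifted_coord lam (Suc i)})"
    define mu where "mu = map (\<lambda>i. int i - z i) [0..<n]"
    have "lam ! Suc i \<le> int i - z i \<and> int i - z i \<le> lam ! i" if "i < n" for i
      using PiE_mem[OF z, of i] that unfolding shifted_coord_def by auto
    then have "interlace lam mu"
      using assms by (auto simp: interlace_def mu_def)
    moreover have "restrict (shifted_coord mu) {..<n} = z"
      using PiE_arb[OF z] by (auto simp: mu_def shifted_coord_def)
    ultimately show "z \<in> (\<lambda>mu. restrict (shifted_coord mu) {..<n}) ` {mu. interlace lam mu}"
      by blast
  qed
qed

lemma card_gt_patterns_Suc:
  assumes n: "n \<ge> 1" and dom: "dominant (Suc n) lam"
  shows "card (gt_patterns (Suc n) lam) = (\<Sum>mu\<in>{mu. interlace lam mu}. card (gt_patterns n mu))"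
proof -
  let ?I = "{mu. interlace lam mu}"
  have "finite ?I"
    using bij_betw_finite[OF interlace_bij_PiE] dom by (simp add: dominant_def finite_PiE)
  moreover have "finite (gt_patterns n mu)" if "mu \<in> ?I" for mu
    using finite_gt_patterns[OF n] interlace_dominant[OF dom] that by blast
  ultimately have "card (gt_patterns (Suc n) lam) = (\<Sum>mu\<in>?I. card (Cons mu ` gt_patterns n mu))"
    unfolding gt_patterns_Suc[OF n dom] by (intro card_UN_disjoint) auto
  also have "\<dots> = (\<Sum>mu\<in>?I. card (gt_patterns n mu))"
    by (intro sum.cong refl card_image) auto
  finally show ?thesis .
qed

lemma card_gt_patterns:
  assumes "N \<ge> 1" "dominant N lam"
  shows "of_nat (card (gt_patterns N lam)) = det (binom_mat N (shifted_coord lam))"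
  using assms
proof (induction N arbitrary: lam)
  case 0
  then show ?case by simp
next
  case (Suc n)
  show ?case
  proof (cases "n = 0")
    case True
    then have "gt_patterns (Suc n) lam = {[]}" by (auto simp: gt_patterns_def tuples_def)
    moreover have "det (binom_mat 1 (shifted_coord lam)) = 1"
      by (subst det_single) (auto simp: binom_mat_def)
    ultimately show ?thesis using True by simp
  next
    case False
    then have n: "n \<ge> 1" by simp
    let ?I = "{mu. interlace lam mu}"
    let ?Z = "PiE {..<n} (\<lambda>i. {shifted_coord lam i..<shifted_coord lam (Suc i)})"
    have bij: "bij_betw (\<lambda>mu. restrict (shifted_coord mu) {..<n}) ?I ?Z"
      using Suc.prems(2) by (intro interlace_bij_PiE) (simp add: dominant_def)
    have "of_nat (card (gt_patterns (Suc n) lam)) = (\<Sum>mu\<in>?I. det (binom_mat n (shifted_coord mu)))"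
      using Suc.IH[OF n] interlace_dominant[OF Suc.prems(2)]
      by (simp add: card_gt_patterns_Suc[OF n Suc.prems(2)])
    also have "\<dots> = (\<Sum>z\<in>?Z. det (binom_mat n z))"
      using sum.reindex_bij_betw[OF bij, of "\<lambda>z. det (binom_mat n z)"] by (simp add: binom_mat_restrict)
    also have "\<dots> = det (binom_mat (Suc n) (shifted_coord lam))"
    proof (rule det_binom_mat_branching)
      fix i assume "i < n"
      then have "lam ! Suc i \<le> lam ! i"
        using Suc.prems(2) by (intro sorted_wrt_ge_nth_mono) (auto simp: dominant_def)
      then show "shifted_coord lam i \<le> shifted_coord lam (Suc i)"
        by (simp add: shifted_coord_def)
    qed
    finally show ?thesis .
  qed
qed

lemma prod_int_diff_eq_fact: "(\<Prod>i<j. of_int (int j - int i) :: 'a::{comm_ring_1,semiring_char_0}) = fact j"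
proof (induction j)
  case (Suc j)
  have "(\<Prod>i<j. of_int (int (Suc j) - int (Suc i)) :: 'a) = (\<Prod>i<j. of_int (int j - int i))"
    by (intro prod.cong) auto
  then show ?case
    using Suc by (simp add: prod.lessThan_Suc_shift fact_Suc del: prod.lessThan_Suc)
qed simp

lemma dimV_eq_det_binom_mat:
  assumes "dominant N lam"
  shows "dimV lam = det (binom_mat N (shifted_coord lam))"
proof -
  have len: "length lam = N" using assms by (simp add: dominant_def)
  have "dimV lam = (\<Prod>j<N. (\<Prod>i<j. of_int (shifted_coord lam j - shifted_coord lam i)) /
      (\<Prod>i<j. of_int (int j - int i)))"
    unfolding dimV_def Let_def len
    by (intro prod.cong refl) (simp add: prod_dividef shifted_coord_def algebra_simps)
  also have "\<dots> = (\<Prod>j<N. \<Prod>i<j. of_int (shifted_coord lam j - shifted_coord lam i)) / (\<Prod>j<N. fact j)"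
    by (subst prod_dividef) (simp only: prod_int_diff_eq_fact)
  also have "\<dots> = det (binom_mat N (shifted_coord lam))"
    by (simp add: det_binom_mat)
  finally show ?thesis .
qed

section \<open>Integrality of the series\<close>

lemma fps_right_inverse_constructor_Ints:
  fixes f :: "'a::ring_1 fps"
  assumes "a \<in> \<int>" "\<And>i. fps_nth f i \<in> \<int>"
  shows "fps_right_inverse_constructor f a n \<in> \<int>"
proof (induction n rule: less_induct)
  case (less n)
  then show ?case
    using assms by (cases n) (auto intro!: Ints_mult Ints_minus Ints_sum)
qed

lemma fps_inverse_Ints:
  fixes f :: "'a::field fps"
  assumes "fps_nth f 0 = 1" "\<And>i. fps_nth f i \<in> \<int>"
  shows "fps_nth (inverse f) n \<in> \<int>"
  using assms by (simp add: fps_inverse_def fps_right_inverse_constructor_Ints)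

lemma fps_prod_Ints:
  fixes f :: "'b \<Rightarrow> 'a::comm_ring_1 fps"
  assumes "\<And>a i. a \<in> A \<Longrightarrow> fps_nth (f a) i \<in> \<int>"
  shows "fps_nth (prod f A) n \<in> \<int>"
  using assms
proof (induction A arbitrary: n rule: infinite_finite_induct)
  case (insert x F)
  then show ?case by (auto simp: fps_mult_nth intro!: Ints_sum Ints_mult)
qed auto

lemma fps_prod_nth_0:
  fixes f :: "'b \<Rightarrow> 'a::comm_ring_1 fps"
  shows "fps_nth (prod f A) 0 = (\<Prod>a\<in>A. fps_nth (f a) 0)"
  by (induction A rule: infinite_finite_induct) auto

lemma P_GL_nth_0: "fps_nth (P_GL mu) 0 = 1"
  by (simp add: P_GL_def fps_prod_nth_0)

lemma P_GL_Ints: "fps_nth (P_GL mu) n \<in> \<int>"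
  unfolding P_GL_def by (intro fps_prod_Ints fps_inverse_Ints) auto

lemma P_coeff_Ints: "P_coeff lam k \<in> \<int>"
  unfolding P_coeff_def Let_def by (intro Ints_sum fps_prod_Ints P_GL_Ints)

lemma P_coeff_below_spread:
  assumes "N \<ge> 1" "dominant N lam" "k < spread lam"
  shows "P_coeff lam k = 0"
proof -
  have len: "length lam = N" using assms(2) by (simp add: dominant_def)
  have none: "{ls\<in>tuples N. twoDelta lam ls \<le> k} = {}"
    using spread_le_twoDelta[OF assms(1,2)] assms(3) by force
  show ?thesis
    unfolding P_coeff_def Let_def len none by simp
qed

lemma P_coeff_spread:
  assumes "N \<ge> 1" "dominant N lam"
  shows "P_coeff lam (spread lam) = of_nat (card (gt_patterns N lam))"
proof -
  have "P_coeff lam (spread lam) = (\<Sum>ls\<in>gt_patterns N lam.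
      fps_nth (\<Prod>j\<in>{1..N-1}. P_GL (ls ! (j - 1))) (nat (spread lam - twoDelta lam ls)))"
    using assms(2) tuples_twoDelta_le_spread[OF assms]
    by (simp add: P_coeff_def dominant_def)
  also have "\<dots> = (\<Sum>ls\<in>gt_patterns N lam. 1)"
  proof (intro sum.cong refl)
    fix ls assume "ls \<in> gt_patterns N lam"
    then have "twoDelta lam ls = spread lam"
      using tuples_twoDelta_le_spread[OF assms] spread_le_twoDelta[OF assms] by force
    then show "fps_nth (\<Prod>j\<in>{1..N-1}. P_GL (ls ! (j - 1))) (nat (spread lam - twoDelta lam ls)) = 1"
      by (simp add: fps_prod_nth_0 P_GL_nth_0)
  qed
  finally show ?thesis by simp
qed

theorem mainTheorem11:
  fixes lam :: "int list" and N :: nat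
  assumes "N \<ge> 1" and "dominant N lam"
  defines "d \<equiv> int (N - 1) * size_cw lam - 2 * n_cw lam"
  shows "(\<forall>k. finite {ls\<in>tuples N. twoDelta lam ls \<le> k})
       \<and> (\<forall>k. P_coeff lam k \<in> \<int>)
       \<and> (\<forall>k<d. P_coeff lam k = 0)
       \<and> P_coeff lam d = dimV lam"
proof -
  have d: "d = spread lam"
    using spread_dominant[OF assms(2)] by (simp add: d_def)
  have "P_coeff lam d = dimV lam"
    unfolding d P_coeff_spread[OF assms(1,2)] card_gt_patterns[OF assms(1,2)]
    using dimV_eq_det_binom_mat[OF assms(2)] by simp
  then show ?thesis
    using finite_tuples_twoDelta_le[OF assms(1,2)] P_coeff_Ints
      P_coeff_below_spread[OF assms(1,2)] d by auto
qed

end
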